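(* Let $u_1>0$, $u_2>0$ with $U:=u_1+u_2<1$, let $0<q<1$, and let $n\in\mathbf N$. Let $(\Omega_n,p)$ be the probability space described in the context, and for $i_0,i_1,i_2\in\mathbf N_0$ with $i_0+i_1+i_2=n$ let $A(n;i_0,i_1,i_2)\subset\Omega_n$ be the set of sequences in which the symbols $0,1,2$ occur exactly $i_0,i_1,i_2$ times respectively. Then $$P\big(A(n;i_0,i_1,i_2)\big)=\sum_{\omega\in A(n;i_0,i_1,i_2)}p(\omega)=u_1^{i_1}u_2^{i_2}(U;q)_{i_0}\begin{bmatrix}n\\ i_0,i_1,i_2\end{bmatrix}_q .$$
   Context: For $j\in\mathbf N$, $(x;q)_j=(1-x)(1-qx)\cdots(1-q^{j-1}x)$, $(x;q)_0=1$, $(q)_j=(q;q)_j$, and for $i_0+i_1+i_2=n$ the $q$-polynomial coefficient is $\begin{bmatrix}n\\ i_0,i_1,i_2\end{bmatrix}_q=\frac{(q)_n}{(q)_{i_0}(q)_{i_1}(q)_{i_2}}$. The sample space $\Omega_n$ consists of all sequences $(\varepsilon_1,\dots,\varepsilon_n)$ with $\varepsilon_j\in\{0,1,2,\ast\}$ such that if $\varepsilon_k=\ast$ then $\varepsilon_l=\ast$ for all $l>k$. Put $p((\varepsilon_1,\dots,\varepsilon_n))=f_1\cdots f_n$ where $f_1=1-U,u_1,u_2,0$ according as $\varepsilon_1=0,1,2,\ast$; for $1\le m\le n-1$, if $\varepsilon_m=\ast$ then $f_{m+1}=1$, and if $\varepsilon_1,\dots,\varepsilon_m\in\{0,1,2\}$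 contain $i_0$ zeros, $i_1$ ones and $i_2$ twos, then $f_{m+1}=1-q^{i_0}U$, $q^{i_0}u_1$, $q^{i_0+i_1}u_2$, $q^{i_0}u_2(1-q^{i_1})$ according as $\varepsilon_{m+1}=0,1,2,\ast$. *)

theory Defs
  imports Main "HOL-Library.FuncSet" Complex_Main
begin

text \<open>Symbols 0, 1, 2 and the absorbing symbol (written Star).\<close>
datatype sym = S0 | S1 | S2 | Star

definition qpoch :: "real \<Rightarrow> real \<Rightarrow> nat \<Rightarrow> real" where
  "qpoch x q j = (\<Prod>i<j. 1 - q ^ i * x)"

definition qfact :: "real \<Rightarrow> nat \<Rightarrow> real" where
  "qfact q j = qpoch q q j"

definition qmultinom :: "real \<Rightarrow> nat \<Rightarrow> nat \<Rightarrow> nat \<Rightarrow> real" where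
  "qmultinom q i0 i1 i2 =
     qfact q (i0 + i1 + i2) / (qfact q i0 * qfact q i1 * qfact q i2)"

definition cnt :: "sym \<Rightarrow> sym list \<Rightarrow> nat" where
  "cnt s xs = length (filter (\<lambda>y. y = s) xs)"

definition Omega :: "nat \<Rightarrow> sym list set" where
  "Omega n = {xs. length xs = n \<and>
      (\<forall>k l. k < l \<and> l < n \<and> xs ! k = Star \<longrightarrow> xs ! l = Star)}"

definition fac :: "real \<Rightarrow> real \<Rightarrow> real \<Rightarrow> sym list \<Rightarrow> sym \<Rightarrow> real" where
  "fac u1 u2 q pre e =
     (if pre \<noteq> [] \<and> last pre = Star then 1
      else (let i0 = cnt S0 pre; i1 = cnt S1 pre; U = u1 + u2 in
        (case e of
           S0 \<Rightarrow> 1 - q ^ i0 * U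
         | S1 \<Rightarrow> q ^ i0 * u1
         | S2 \<Rightarrow> q ^ (i0 + i1) * u2
         | Star \<Rightarrow> q ^ i0 * u2 * (1 - q ^ i1))))"

definition pr :: "real \<Rightarrow> real \<Rightarrow> real \<Rightarrow> sym list \<Rightarrow> real" where
  "pr u1 u2 q xs = (\<Prod>m<length xs. fac u1 u2 q (take m xs) (xs ! m))"

definition Aev :: "nat \<Rightarrow> nat \<Rightarrow> nat \<Rightarrow> nat \<Rightarrow> sym list set" where
  "Aev n i0 i1 i2 = {xs \<in> Omega n. cnt S0 xs = i0 \<and> cnt S1 xs = i1 \<and> cnt S2 xs = i2}"

end

theory Submission
  imports Defs
begin

text \<open>
  Since \<open>i0 + i1 + i2 = n\<close>, no sequence in \<open>A(n;i0,i1,i2)\<close> contains \<open>*\<close>, so the event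
  is just the set of words over \<open>{0,1,2}\<close> with the given letter counts, and on such words
  the factor of the last letter depends only on the counts of the prefix.  Splitting the sum
  \<open>S(i0,i1,i2)\<close> according to the last letter therefore gives
  \<open>S(i0,i1,i2) = (1 - q^(i0-1) U) S(i0-1,i1,i2) + q^i0 u1 S(i0,i1-1,i2) + q^(i0+i1) u2 S(i0,i1,i2-1)\<close>.
  The closed form \<open>F\<close> satisfies the same recursion: after multiplication by \<open>1 - q^n\<close> the
  three terms become \<open>(1 - q^i0) F\<close>, \<open>q^i0 (1 - q^i1) F\<close> and \<open>q^(i0+i1) (1 - q^i2) F\<close>
  (also when an index is \<open>0\<close>), and these add up to \<open>(1 - q^n) F\<close>.
\<close>

lemma qpoch_Suc: "qpoch x q (Suc k) = qpoch x q k * (1 - q ^ k * x)"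
  by (simp add: qpoch_def)

lemma qfact_Suc: "qfact q (Suc k) = qfact q k * (1 - q ^ Suc k)"
  by (simp add: qfact_def qpoch_def mult.commute)

lemma qmultinom_0_0_0 [simp]: "qmultinom q 0 0 0 = 1"
  by (simp add: qmultinom_def qfact_def qpoch_def)

lemma qmultinom_commute_12: "qmultinom q a b c = qmultinom q b a c"
  by (simp add: qmultinom_def ac_simps)

lemma qmultinom_commute_13: "qmultinom q a b c = qmultinom q c b a"
  by (simp add: qmultinom_def ac_simps)

text \<open>No condition on \<open>q\<close>: if \<open>q^(a+1) = 1\<close>, then \<open>(q)_(a+b+c+1)\<close> has a zero factor
  and both sides are \<open>0\<close> (the left one by division by zero).\<close>

lemma qmultinom_Suc_first:
  "qmultinom q (Suc a) b c * (1 - q ^ Suc a) = qmultinom q a b c * (1 - q ^ Suc (a + b + c))"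
proof (cases "q ^ Suc a = 1")
  case True
  have "qfact q (Suc a + b + c) = 0"
    unfolding qfact_def qpoch_def using True
    by (intro prod_zero bexI[of _ a]) (auto simp: mult.commute)
  then show ?thesis using True by (simp add: qmultinom_def qfact_Suc)
next
  case False
  then show ?thesis
    by (simp add: qmultinom_def qfact_Suc)
qed

lemma qmultinom_Suc_second:
  "qmultinom q a (Suc b) c * (1 - q ^ Suc b) = qmultinom q a b c * (1 - q ^ Suc (a + b + c))"
  using qmultinom_Suc_first[of q b a c] by (simp add: qmultinom_commute_12[of q a] ac_simps)

lemma qmultinom_Suc_third:
  "qmultinom q a b (Suc c) * (1 - q ^ Suc c) = qmultinom q a b c * (1 - q ^ Suc (a + b + c))"
  using qmultinom_Suc_first[of q c b a] by (simp add: qmultinom_commute_13[of q a] ac_simps)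

definition prob_A :: "real \<Rightarrow> real \<Rightarrow> real \<Rightarrow> nat \<Rightarrow> nat \<Rightarrow> nat \<Rightarrow> real" where
  "prob_A u1 u2 q i0 i1 i2 = u1 ^ i1 * u2 ^ i2 * qpoch (u1 + u2) q i0 * qmultinom q i0 i1 i2"

lemma prob_A_Suc_first:
  "(1 - q ^ a * (u1 + u2)) * prob_A u1 u2 q a b c * (1 - q ^ Suc (a + b + c))
     = (1 - q ^ Suc a) * prob_A u1 u2 q (Suc a) b c"
  using qmultinom_Suc_first[of q a b c] by (simp add: prob_A_def qpoch_Suc ac_simps)

lemma prob_A_Suc_second:
  "u1 * prob_A u1 u2 q a b c * (1 - q ^ Suc (a + b + c)) = (1 - q ^ Suc b) * prob_A u1 u2 q a (Suc b) c"
  using qmultinom_Suc_second[of q a b c] by (simp add: prob_A_def ac_simps)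

lemma prob_A_Suc_third:
  "u2 * prob_A u1 u2 q a b c * (1 - q ^ Suc (a + b + c)) = (1 - q ^ Suc c) * prob_A u1 u2 q a b (Suc c)"
  using qmultinom_Suc_third[of q a b c] by (simp add: prob_A_def ac_simps)

lemma cnt_simps [simp]:
  "cnt s [] = 0"
  "cnt s (x # xs) = (if x = s then 1 else 0) + cnt s xs"
  "cnt s (xs @ ys) = cnt s xs + cnt s ys"
  by (simp_all add: cnt_def)

lemma length_eq_sum_cnt: "length xs = cnt S0 xs + cnt S1 xs + cnt S2 xs + cnt Star xs"
proof (induction xs)
  case (Cons x xs)
  then show ?case by (cases x) auto
qed simp

lemma cnt_eq_0_iff: "cnt s xs = 0 \<longleftrightarrow> s \<notin> set xs"
  by (induction xs) auto

definition words :: "nat \<Rightarrow> nat \<Rightarrow> nat \<Rightarrow> sym list set" where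
  "words i0 i1 i2 = {w. Star \<notin> set w \<and> cnt S0 w = i0 \<and> cnt S1 w = i1 \<and> cnt S2 w = i2}"

lemma length_words: "w \<in> words i0 i1 i2 \<Longrightarrow> length w = i0 + i1 + i2"
  using length_eq_sum_cnt[of w] by (simp add: words_def cnt_eq_0_iff)

lemma finite_UNIV_sym: "finite (UNIV :: sym set)"
proof (rule finite_subset)
  show "UNIV \<subseteq> {S0, S1, S2, Star}"
  proof
    fix x :: sym
    show "x \<in> {S0, S1, S2, Star}" by (cases x) simp_all
  qed
qed simp

lemma finite_words: "finite (words i0 i1 i2)"
proof (rule finite_subset)
  show "words i0 i1 i2 \<subseteq> {w. set w \<subseteq> UNIV \<and> length w = i0 + i1 + i2}"
    using length_words by blast
  show "finite {w. set w \<subseteq> (UNIV :: sym set) \<and> length w = i0 + i1 + i2}"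
    by (rule finite_lists_length_eq) (rule finite_UNIV_sym)
qed

lemma Aev_eq_words: "Aev (i0 + i1 + i2) i0 i1 i2 = words i0 i1 i2"
proof (intro set_eqI iffI)
  fix w assume w: "w \<in> Aev (i0 + i1 + i2) i0 i1 i2"
  then have "length w = i0 + i1 + i2"
    by (simp add: Aev_def Omega_def)
  with w have "cnt Star w = 0"
    using length_eq_sum_cnt[of w] by (simp add: Aev_def)
  with w show "w \<in> words i0 i1 i2"
    by (simp add: Aev_def words_def cnt_eq_0_iff)
next
  fix w assume w: "w \<in> words i0 i1 i2"
  have "w ! k \<noteq> Star" if "k < length w" for k
    using w nth_mem[OF that] by (auto simp: words_def)
  with w length_words[OF w] show "w \<in> Aev (i0 + i1 + i2) i0 i1 i2"
    by (simp add: Aev_def Omega_def words_def)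
qed

lemma snoc_preimage_words [simp]:
  "{w. w @ [S0] \<in> words 0 i1 i2} = {}"
  "{w. w @ [S1] \<in> words i0 0 i2} = {}"
  "{w. w @ [S2] \<in> words i0 i1 0} = {}"
  "{w. w @ [S0] \<in> words (Suc i0) i1 i2} = words i0 i1 i2"
  "{w. w @ [S1] \<in> words i0 (Suc i1) i2} = words i0 i1 i2"
  "{w. w @ [S2] \<in> words i0 i1 (Suc i2)} = words i0 i1 i2"
  by (auto simp: words_def)

lemma sum_by_last:
  assumes "finite A" "[] \<notin> A" "finite E" "last ` A \<subseteq> E"
  shows "sum f A = (\<Sum>e\<in>E. \<Sum>w \<in> {w. w @ [e] \<in> A}. f (w @ [e]))"
proof -
  have "{x \<in> A. last x = e} = (\<lambda>w. w @ [e]) ` {w. w @ [e] \<in> A}" for e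
  proof (intro set_eqI iffI)
    fix x assume x: "x \<in> {x \<in> A. last x = e}"
    with \<open>[] \<notin> A\<close> obtain v where "x = v @ [e]"
      by (cases x rule: rev_cases) auto
    with x show "x \<in> (\<lambda>w. w @ [e]) ` {w. w @ [e] \<in> A}"
      by auto
  qed auto
  then have "sum f {x \<in> A. last x = e} = (\<Sum>w \<in> {w. w @ [e] \<in> A}. f (w @ [e]))" for e
    by (simp add: sum.reindex inj_on_def)
  then show ?thesis
    using sum.group[OF assms(1,3,4), of f] by simp
qed

lemma sum_words_by_last:
  assumes "0 < i0 + i1 + i2"
  shows "(\<Sum>w\<in>words i0 i1 i2. f w) =
           (\<Sum>w \<in> {w. w @ [S0] \<in> words i0 i1 i2}. f (w @ [S0]))
         + (\<Sum>w \<in> {w. w @ [S1] \<in> words i0 i1 i2}. f (w @ [S1]))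
         + (\<Sum>w \<in> {w. w @ [S2] \<in> words i0 i1 i2}. f (w @ [S2]))"
proof -
  have "[] \<notin> words i0 i1 i2"
    using assms length_words by fastforce
  moreover have "last ` words i0 i1 i2 \<subseteq> {S0, S1, S2}"
  proof
    fix e assume "e \<in> last ` words i0 i1 i2"
    then obtain w where "w \<in> words i0 i1 i2" "e = last w" by blast
    moreover from this have "w \<noteq> []"
      using \<open>[] \<notin> words i0 i1 i2\<close> by blast
    ultimately have "e \<in> set w" "Star \<notin> set w"
      by (simp_all add: words_def)
    then have "e \<noteq> Star" by blast
    then show "e \<in> {S0, S1, S2}" by (cases e) simp_all
  qed
  then show ?thesis
    using sum_by_last[OF finite_words \<open>[] \<notin> words i0 i1 i2\<close>, of "{S0, S1, S2}" f]
    by (simp add: add.assoc)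
qed

lemma pr_Nil [simp]: "pr u1 u2 q [] = 1"
  by (simp add: pr_def)

lemma pr_snoc: "pr u1 u2 q (w @ [e]) = pr u1 u2 q w * fac u1 u2 q w e"
proof -
  have "(\<Prod>m<length w. fac u1 u2 q (take m (w @ [e])) ((w @ [e]) ! m)) = pr u1 u2 q w"
    unfolding pr_def by (intro prod.cong) (auto simp: nth_append)
  then show ?thesis
    by (simp add: pr_def nth_append)
qed

lemma fac_words:
  assumes "w \<in> words i0 i1 i2"
  shows "fac u1 u2 q w S0 = 1 - q ^ i0 * (u1 + u2)"
    and "fac u1 u2 q w S1 = q ^ i0 * u1"
    and "fac u1 u2 q w S2 = q ^ (i0 + i1) * u2"
proof -
  have "\<not> (w \<noteq> [] \<and> last w = Star)"
    using assms by (auto simp: words_def dest: last_in_set)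
  with assms show "fac u1 u2 q w S0 = 1 - q ^ i0 * (u1 + u2)"
    and "fac u1 u2 q w S1 = q ^ i0 * u1"
    and "fac u1 u2 q w S2 = q ^ (i0 + i1) * u2"
    by (auto simp: fac_def words_def)
qed

lemma sum_pr_snoc_words:
  "(\<Sum>w\<in>words i0 i1 i2. pr u1 u2 q (w @ [S0]))
     = (1 - q ^ i0 * (u1 + u2)) * (\<Sum>w\<in>words i0 i1 i2. pr u1 u2 q w)"
  "(\<Sum>w\<in>words i0 i1 i2. pr u1 u2 q (w @ [S1]))
     = q ^ i0 * u1 * (\<Sum>w\<in>words i0 i1 i2. pr u1 u2 q w)"
  "(\<Sum>w\<in>words i0 i1 i2. pr u1 u2 q (w @ [S2]))
     = q ^ (i0 + i1) * u2 * (\<Sum>w\<in>words i0 i1 i2. pr u1 u2 q w)"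
  by (simp_all add: sum_distrib_left pr_snoc fac_words mult.commute)

lemma sum_pr_words:
  fixes q :: real
  assumes "\<bar>q\<bar> \<noteq> 1"
  shows "(\<Sum>w\<in>words i0 i1 i2. pr u1 u2 q w) = prob_A u1 u2 q i0 i1 i2"
proof (induction "i0 + i1 + i2" arbitrary: i0 i1 i2)
  case 0
  have "w = []" if "w \<in> words i0 i1 i2" for w
    using length_words[OF that] 0 by simp
  moreover have "[] \<in> words i0 i1 i2"
    using 0 by (simp add: words_def)
  ultimately have "words i0 i1 i2 = {[]}"
    by blast
  with 0 show ?case
    by (simp add: prob_A_def qpoch_def)
next
  case (Suc m)
  let ?S = "\<lambda>a b c. \<Sum>w\<in>words a b c. pr u1 u2 q w"
  let ?T = "\<lambda>e. \<Sum>w \<in> {w. w @ [e] \<in> words i0 i1 i2}. pr u1 u2 q (w @ [e])"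
  let ?F = "prob_A u1 u2 q i0 i1 i2"
  let ?d = "1 - q ^ Suc m"
  have last_S0: "?d * ?T S0 = (1 - q ^ i0) * ?F"
  proof (cases i0)
    case (Suc a)
    with Suc.hyps show ?thesis
      using prob_A_Suc_first[of q a u1 u2 i1 i2] by (simp add: sum_pr_snoc_words ac_simps)
  qed simp
  have last_S1: "?d * ?T S1 = q ^ i0 * (1 - q ^ i1) * ?F"
  proof (cases i1)
    case (Suc b)
    with Suc.hyps show ?thesis
      using prob_A_Suc_second[of u1 u2 q i0 b i2] by (simp add: sum_pr_snoc_words ac_simps)
  qed simp
  have last_S2: "?d * ?T S2 = q ^ (i0 + i1) * (1 - q ^ i2) * ?F"
  proof (cases i2)
    case (Suc c)
    with Suc.hyps show ?thesis
      using prob_A_Suc_third[of u2 u1 q i0 i1 c] by (simp add: sum_pr_snoc_words ac_simps)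
  qed simp
  have "?S i0 i1 i2 = ?T S0 + ?T S1 + ?T S2"
    by (rule sum_words_by_last) (simp add: Suc.hyps(2)[symmetric])
  then have "?d * ?S i0 i1 i2 = ?d * ?T S0 + ?d * ?T S1 + ?d * ?T S2"
    by (simp only: distrib_left)
  also have "\<dots> = ((1 - q ^ i0) + q ^ i0 * (1 - q ^ i1) + q ^ (i0 + i1) * (1 - q ^ i2)) * ?F"
    unfolding last_S0 last_S1 last_S2 by (simp only: distrib_right)
  also have "\<dots> = ?d * ?F"
  proof -
    have "q ^ Suc m = q ^ i0 * q ^ i1 * q ^ i2"
      by (simp only: Suc.hyps(2) power_add)
    then show ?thesis
      by (simp add: algebra_simps power_add)
  qed
  finally have "?d * ?S i0 i1 i2 = ?d * ?F" .
  moreover have "?d \<noteq> 0"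
    using assms power_eq_1_iff[of q "Suc m"] by auto
  ultimately show ?case
    by simp
qed

theorem theorem3p1:
  fixes u1 u2 q :: real and n i0 i1 i2 :: nat
  assumes "u1 > 0" and "u2 > 0" and "u1 + u2 < 1"
    and "0 < q" and "q < 1"
    and "n \<ge> 1"
    and "i0 + i1 + i2 = n"
  shows "(\<Sum>\<omega>\<in>Aev n i0 i1 i2. pr u1 u2 q \<omega>)
           = u1 ^ i1 * u2 ^ i2 * qpoch (u1 + u2) q i0 * qmultinom q i0 i1 i2"
proof -
  have "\<bar>q\<bar> \<noteq> 1"
    using \<open>0 < q\<close> \<open>q < 1\<close> by simp
  then show ?thesis
    unfolding \<open>i0 + i1 + i2 = n\<close>[symmetric] Aev_eq_words sum_pr_words[OF \<open>\<bar>q\<bar> \<noteq> 1\<close>]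
    by (simp add: prob_A_def)
qed

end
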